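(* Suppose $t_i^{(m)},g_i^{(m)}\in\mathbb{C}$ ($m,i\in\mathbb{Z}$) satisfy $$\left(i-\tfrac{n}{2}\right)t_i^{(m)}=\left(\tfrac{3m}{2}-n-i\right)g_{n-m+i}^{(n)}\quad\text{for all }m,n,i\in\mathbb{Z}.$$ Then $t_i^{(m)}=g_i^{(m)}=0$ for all $m,i\in\mathbb{Z}$. *)

theory Defs
  imports Complex_Main
begin

end

theory Submission
  imports Defs
begin

text \<open>Doubling the relation gives integer coefficients,
  \<open>(2i - n) t m i = (3m - 2n - 2i) g n (n - m + i)\<close>.
  Taking \<open>n = 2i\<close> kills the left side, so \<open>g (2k)\<close> vanishes off the index \<open>k\<close>;
  an even \<open>n\<close> avoiding the two bad values then kills every \<open>t\<close>, and once all \<open>t\<close>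
  are gone, a value of \<open>i\<close> with nonzero right-hand coefficient kills every \<open>g\<close>.\<close>

lemma of_int_mult_eq_0_imp:
  fixes x :: "'a :: {idom, ring_char_0}"
  assumes "of_int a * x = 0" and "a \<noteq> 0"
  shows "x = 0"
  using assms by simp

context
  fixes t g :: "int \<Rightarrow> int \<Rightarrow> 'a :: {idom, ring_char_0}"
  assumes relation: "\<And>m n i. of_int (2 * i - n) * t m i = of_int (3 * m - 2 * n - 2 * i) * g n (n - m + i)"
begin

lemma g_even_level_vanishes:
  assumes "j \<noteq> k"
  shows "g (2 * k) j = 0"
proof (rule of_int_mult_eq_0_imp)
  show "of_int (3 * (3 * k - j) - 2 * (2 * k) - 2 * k) * g (2 * k) j = 0"
    using relation [where m = "3 * k - j" and n = "2 * k" and i = k] by simp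
  show "3 * (3 * k - j) - 2 * (2 * k) - 2 * k \<noteq> 0"
    using assms by simp
qed

lemma t_vanishes: "t m i = 0"
proof (rule of_int_mult_eq_0_imp)
  define k where "k = max i (m - i) + 1"
  have "g (2 * k) (2 * k - m + i) = 0"
    by (rule g_even_level_vanishes) (simp add: k_def)
  then show "of_int (2 * i - 2 * k) * t m i = 0"
    using relation [where n = "2 * k"] by simp
  show "2 * i - 2 * k \<noteq> 0"
    by (simp add: k_def max_def)
qed

lemma g_vanishes: "g n j = 0"
proof (rule of_int_mult_eq_0_imp)
  define i where "i = 3 * j - n + 1"
  show "of_int (3 * (n - j + i) - 2 * n - 2 * i) * g n j = 0"
    using relation [where m = "n - j + i" and n = n and i = i] by (simp add: t_vanishes)
  show "3 * (n - j + i) - 2 * n - 2 * i \<noteq> 0"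
    by (simp add: i_def)
qed

end

theorem proposition2p2:
  fixes t g :: "int \<Rightarrow> int \<Rightarrow> complex"
  assumes "\<And>m n i. (of_int i - of_int n / 2) * t m i
              = (3 * of_int m / 2 - of_int n - of_int i) * g n (n - m + i)"
  shows "\<forall>m i. t m i = 0 \<and> g m i = 0"
proof -
  have doubled: "of_int (2 * i - n) * t m i = of_int (3 * m - 2 * n - 2 * i) * g n (n - m + i)"
    for m n i
  proof -
    have "of_int (2 * i - n) * t m i = 2 * ((of_int i - of_int n / 2) * t m i)"
      by (simp add: algebra_simps)
    also have "\<dots> = 2 * ((3 * of_int m / 2 - of_int n - of_int i) * g n (n - m + i))"
      by (simp add: assms)
    also have "\<dots> = of_int (3 * m - 2 * n - 2 * i) * g n (n - m + i)"
      by (simp add: algebra_simps)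
    finally show ?thesis .
  qed
  show ?thesis
    using t_vanishes [OF doubled] g_vanishes [OF doubled] by blast
qed

end
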